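(* Let $N=M=1$ and $\sigma>0$. For every GKP-stabilizer code $(\bm S_{\rm enc},\bm M,\bm f)$ with $\bm S_{\rm enc}\in{\rm Sp}(4,\mathbb R)$ whose ancilla lattice is canonical (i.e. $\bm M^\top\bm\Omega_1\bm M=2\pi\bm\Omega_1$), there exist a gain $G\ge1$, a matrix $\bm\Lambda\in{\rm Sp}(2,\mathbb R)$ and a measurable estimator $\bm f'$ such that the TMS code with encoding $\bm S_G$, ancilla lattice generator $\sqrt{2\pi}\,\bm\Lambda\bm\Omega_1$ (the square lattice transformed by $\bm\Lambda$) and estimator $\bm f'$ has the same geometric-mean error. Hence the optimal such code, in terms of geometric-mean error, is a TMS code with a single-mode lattice obtained from the square lattice by a symplectic transformation.
   Context: $\bm\Omega_1=\begin{pmatrix}0&1\\-1&0\end{pmatrix}$, $\bm\Omega=\bm\Omega_1\oplus\bm\Omega_1$ on two modes; ${\rm Sp}(2n,\mathbb R)=\{\bm S:\bm S\bm\Omega\bm S^\top=\bm\Omega\}$. $\bm S_G=\begin{pmatrix}\sqrt G\bm I_2&\sqrt{G-1}\bm Z\\ \sqrt{G-1}\bm Z&\sqrt G\bm I_2\end{pmatrix}$, $\bm Z={\rm diag}(1,-1)$. $R_{\sqrt{2\pi}}$ reduces each coordinate modulo $\sqrt{2\pi}$ into $[-\sqrt{\pi/2},\sqrt{\pi/2})$. Code model: mode 1 is data, mode 2 ancilla; a code $(\bm S_{\rm enc},\bm M,\bm f)$ has $\bm S_{\rm enc}\in{\rm Sp}(4,\mathbb R)$, invertible lattice generator $\bm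 M\in\mathbb R^{2\times2}$, measurable $\bm f:\mathbb R^2\to\mathbb R^2$; with $\bm\xi\sim\mathcal N(0,\sigma^2\bm I_4)$, $\bm x=\bm S_{\rm enc}^{-1}\bm\xi=(\bm x_d,\bm x_a)$, syndrome $\bm s=R_{\sqrt{2\pi}}(\bm M^\top\bm\Omega_1\bm x_a)$, residual $\bm\varepsilon=\bm x_d-\bm f(\bm s)$, $\bm V_{\rm out}=\mathbb E[\bm\varepsilon\bm\varepsilon^\top]$, geometric-mean error $\bar\sigma^2_{\rm GM}=(\det\bm V_{\rm out})^{1/2}$. *)

theory Defs
  imports "HOL-Analysis.Analysis" "HOL-Probability.Probability"
begin

text \<open>Mode 1 (data) = coordinates 1,2 (q1,p1),
 mode 2 (ancilla) = coordinates 3,4 (q2,p2).\<close>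

definition idx4 :: "4 \<Rightarrow> nat" where
  "idx4 i = (if i = 1 then 1 else if i = 2 then 2 else if i = 3 then 3 else 4)"

definition mat4 :: "(nat \<Rightarrow> nat \<Rightarrow> real) \<Rightarrow> real^4^4" where
  "mat4 g = (\<chi> i j. g (idx4 i) (idx4 j))"

definition vec2 :: "real \<Rightarrow> real \<Rightarrow> real^2" where
  "vec2 a b = (\<chi> i. if i = 1 then a else b)"

definition mat2 :: "real \<Rightarrow> real \<Rightarrow> real \<Rightarrow> real \<Rightarrow> real^2^2" where
  "mat2 a b c d = (\<chi> i. if i = 1 then vec2 a b else vec2 c d)"

definition Omega1 :: "real^2^2" where
  "Omega1 = mat2 0 1 (-1) 0"

definition Omega2 :: "real^4^4" where
  "Omega2 = mat4 (\<lambda>i j. if (i = 1 \<and> j = 2) \<or> (i = 3 \<and> j = 4) then 1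
                        else if (i = 2 \<and> j = 1) \<or> (i = 4 \<and> j = 3) then -1 else 0)"

definition symplectic2 :: "real^2^2 \<Rightarrow> bool" where
  "symplectic2 S \<longleftrightarrow> S ** Omega1 ** transpose S = Omega1"

definition symplectic4 :: "real^4^4 \<Rightarrow> bool" where
  "symplectic4 S \<longleftrightarrow> S ** Omega2 ** transpose S = Omega2"

definition S_TMS :: "real \<Rightarrow> real^4^4" where
  "S_TMS G = mat4 (\<lambda>i j.
     if i = j then sqrt G
     else if (i = 1 \<and> j = 3) \<or> (i = 3 \<and> j = 1) then sqrt (G - 1)
     else if (i = 2 \<and> j = 4) \<or> (i = 4 \<and> j = 2) then - sqrt (G - 1)
     else 0)"

definition modred :: "real \<Rightarrow> real" where
  "modred t = t - sqrt (2*pi) * of_int \<lfloor>t / sqrt (2*pi) + 1/2\<rfloor>"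

definition R_sqrt2pi :: "real^2 \<Rightarrow> real^2" where
  "R_sqrt2pi v = (\<chi> i. modred (v $ i))"

definition data_part :: "real^4 \<Rightarrow> real^2" where
  "data_part x = vec2 (x $ 1) (x $ 2)"

definition anc_part :: "real^4 \<Rightarrow> real^2" where
  "anc_part x = vec2 (x $ 3) (x $ 4)"

definition gauss4 :: "real \<Rightarrow> (real^4) measure" where
  "gauss4 \<sigma> = density lborel (\<lambda>\<xi>. ennreal (\<Prod>i\<in>UNIV. normal_density 0 \<sigma> (\<xi> $ i)))"

definition residual :: "real^4^4 \<Rightarrow> real^2^2 \<Rightarrow> (real^2 \<Rightarrow> real^2) \<Rightarrow> real^4 \<Rightarrow> real^2" where
  "residual Senc M f \<xi> =
     (let x = matrix_inv Senc *v \<xi>;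
          s = R_sqrt2pi ((transpose M ** Omega1) *v anc_part x)
      in data_part x - f s)"

definition V_out :: "real \<Rightarrow> real^4^4 \<Rightarrow> real^2^2 \<Rightarrow> (real^2 \<Rightarrow> real^2) \<Rightarrow> real^2^2" where
  "V_out \<sigma> Senc M f =
     (\<chi> i j. integral\<^sup>L (gauss4 \<sigma>) (\<lambda>\<xi>. residual Senc M f \<xi> $ i * residual Senc M f \<xi> $ j))"

definition gm_error :: "real \<Rightarrow> real^4^4 \<Rightarrow> real^2^2 \<Rightarrow> (real^2 \<Rightarrow> real^2) \<Rightarrow> ereal" where
  "gm_error \<sigma> Senc M f =
     (if (\<forall>i. integrable (gauss4 \<sigma>) (\<lambda>\<xi>. (residual Senc M f \<xi> $ i)^2))
      then ereal (sqrt (det (V_out \<sigma> Senc M f)))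
      else \<infinity>)"

end

theory Submission
  imports Defs
begin

text \<open>
  The inverse of a two-mode symplectic matrix factors as S^-1 = (A (+) B) S_G^-1 U with
  A, B in Sp(2,R), G >= 1 and U orthogonal: the Gram matrix S^-1 S^-T is symmetric, positive
  and symplectic, and local symplectic maps bring its 2x2 blocks to those of S_G^-2.
  The isotropic Gaussian noise is invariant under U.  The ancilla factor B is absorbed into
  the lattice generator B^-1 M, which is again canonical and therefore of the form
  sqrt(2 pi) Lambda Omega_1 with Lambda symplectic; the data factor A is absorbed into the
  estimator A^-1 f and leaves the residual multiplied by A, which turns V_out into
  A V_out A^T without changing its determinant.
\<close>

lemma matrix_add_rdistrib: "(A + B) ** C = A ** C + B ** (C :: 'a::semiring_1^'p^'n)"
  by (simp add: matrix_matrix_mult_def vec_eq_iff sum.distrib distrib_right)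

lemma matrix_scaleR_left: "(c *\<^sub>R A) ** B = c *\<^sub>R (A ** B :: real^'p^'n)"
  by (simp add: scalar_matrix_assoc)

lemma matrix_scaleR_right: "A ** (c *\<^sub>R B) = c *\<^sub>R (A ** B :: real^'p^'n)"
  by (simp add: matrix_scalar_ac scalar_matrix_assoc)

lemma matrix_mult_uminus_left: "(- A) ** B = - (A ** B :: real^'p^'n)"
  by (simp add: matrix_matrix_mult_def vec_eq_iff sum_negf)

lemma matrix_mult_uminus_right: "A ** (- B) = - (A ** B :: real^'p^'n)"
  by (simp add: matrix_matrix_mult_def vec_eq_iff sum_negf)

lemma transpose_add: "transpose (A + B) = transpose A + transpose (B :: real^'n^'m)"
  by (simp add: transpose_def vec_eq_iff)

lemma transpose_zero [simp]: "transpose 0 = (0 :: real^'n^'m)"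
  by (simp add: transpose_def vec_eq_iff)

lemma transpose_uminus: "transpose (- A) = - transpose (A :: real^'n^'m)"
  by (simp add: transpose_def vec_eq_iff)

lemma matrix_inv_eqI:
  fixes A B :: "real^'n^'n"
  assumes "A ** B = mat 1"
  shows "matrix_inv A = B"
proof -
  have BA: "B ** A = mat 1" using assms matrix_left_right_inverse by blast
  have inv: "A ** matrix_inv A = mat 1 \<and> matrix_inv A ** A = mat 1"
    unfolding matrix_inv_def by (rule someI[of _ B]) (use assms BA in simp)
  have "matrix_inv A = (B ** A) ** matrix_inv A" using BA by simp
  also have "\<dots> = B" using inv by (simp flip: matrix_mul_assoc)
  finally show ?thesis .
qed

lemma orthogonal_factor_of_gram:
  fixes T K L :: "real^'n^'n"
  assumes "T ** transpose T = K ** transpose K" and "L ** K = mat 1"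
  shows "transpose (L ** T) ** (L ** T) = mat 1" "K ** (L ** T) = T"
proof -
  have KL: "K ** L = mat 1" using assms(2) matrix_left_right_inverse by blast
  have "(L ** T) ** transpose (L ** T) = (L ** K) ** transpose (L ** K)"
    using assms(1) by (metis matrix_transpose_mul matrix_mul_assoc)
  then show "transpose (L ** T) ** (L ** T) = mat 1"
    using assms(2) matrix_left_right_inverse by auto
  show "K ** (L ** T) = T" using KL by (simp add: matrix_mul_assoc)
qed

section \<open>Two-by-two matrices and the symplectic form\<close>

lemmas mat2_simps = vec_eq_iff forall_2 matrix_matrix_mult_def sum_2 transpose_def mat_def
   Omega1_def mat2_def vec2_def det_2 matrix_vector_mult_def

definition Zdiag :: "real^2^2" where "Zdiag = mat2 1 0 0 (-1)"

definition adjugate2 :: "real^2^2 \<Rightarrow> real^2^2" where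
  "adjugate2 X = mat2 (X$2$2) (-X$1$2) (-X$2$1) (X$1$1)"

lemma Omega1_neq_0 [simp]: "Omega1 \<noteq> 0"
  by (simp add: mat2_simps)

lemma scaleR_Omega1_eq_Omega1_iff [simp]: "a *\<^sub>R Omega1 = Omega1 \<longleftrightarrow> a = 1"
  using scaleR_cancel_right[of a Omega1 1] by simp

lemma Omega1_congruence: "X ** Omega1 ** transpose X = det X *\<^sub>R Omega1"
  by (simp add: mat2_simps algebra_simps)

lemma Omega1_congruence_transpose: "transpose X ** Omega1 ** X = det X *\<^sub>R Omega1"
  by (simp add: mat2_simps algebra_simps)

lemma Omega1_congruence_eq_iff_det:
  "transpose N ** Omega1 ** N = c *\<^sub>R Omega1 \<longleftrightarrow> det N = c"
  by (simp add: Omega1_congruence_transpose)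

lemma symplectic2_iff_det: "symplectic2 X \<longleftrightarrow> det X = 1"
  by (simp add: symplectic2_def Omega1_congruence)

lemma adjugate2_right: "X ** adjugate2 X = det X *\<^sub>R mat 1"
  by (auto simp add: mat2_simps adjugate2_def algebra_simps)

lemma adjugate2_left: "adjugate2 X ** X = det X *\<^sub>R mat 1"
  by (auto simp add: mat2_simps adjugate2_def algebra_simps)

lemma det_adjugate2 [simp]: "det (adjugate2 X) = det X"
  by (simp add: mat2_simps adjugate2_def algebra_simps)

lemma transpose_adjugate2_Omega1: "transpose (adjugate2 X) ** Omega1 = Omega1 ** X"
  by (simp add: mat2_simps adjugate2_def)

lemma det_scaleR2: "det (c *\<^sub>R (X::real^2^2)) = c^2 * det X"
  by (simp add: mat2_simps power2_eq_square algebra_simps)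

lemma Omega1_squared: "Omega1 ** Omega1 = - mat 1"
  by (simp add: mat2_simps)

lemma transpose_Zdiag: "transpose Zdiag = Zdiag"
  by (simp add: Zdiag_def mat2_simps)

lemma det_add_det_eq_1:
  assumes "X ** Omega1 ** transpose X + Y ** Omega1 ** transpose Y = Omega1"
  shows "det X + det Y = 1"
  using assms by (simp add: Omega1_congruence scaleR_add_left[symmetric])

lemma Omega1_anticommute:
  assumes "Omega1 ** C + C ** Omega1 = 0"
  shows "C = mat2 (C$1$1) (C$1$2) (C$1$2) (- C$1$1)"
proof -
  have "(Omega1 ** C + C ** Omega1) $ i $ j = 0" for i j using assms by simp
  from this[of 1 1] this[of 1 2] this[of 2 2] show ?thesis by (simp add: mat2_simps)
qed

lemma unimodular_sandwich_eq_0: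
  fixes X Y N :: "real^2^2"
  assumes "det X = 1" "det Y = 1" "X ** N ** transpose Y = 0"
  shows "N = 0"
proof -
  have "N = (adjugate2 X ** X) ** N ** transpose (adjugate2 Y ** Y)"
    using assms(1,2) by (simp add: adjugate2_left)
  also have "\<dots> = adjugate2 X ** (X ** N ** transpose Y) ** transpose (adjugate2 Y)"
    by (simp add: matrix_mul_assoc matrix_transpose_mul)
  finally show ?thesis using assms(3) by simp
qed

lemma symplectic_gram_sandwich:
  fixes X Y K :: "real^2^2"
  assumes "det X = 1" "det Y = 1"
  shows "(X ** transpose X) ** Omega1 ** (X ** K ** transpose Y)
       + (X ** K ** transpose Y) ** Omega1 ** (Y ** transpose Y)
       = X ** (Omega1 ** K + K ** Omega1) ** transpose Y"
proof -
  have "transpose X ** Omega1 ** X = Omega1" "transpose Y ** Omega1 ** Y = Omega1"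
    using assms by (simp_all add: Omega1_congruence_transpose)
  then have "(X ** transpose X) ** Omega1 ** (X ** K ** transpose Y) = X ** Omega1 ** K ** transpose Y"
    "(X ** K ** transpose Y) ** Omega1 ** (Y ** transpose Y) = X ** K ** Omega1 ** transpose Y"
    by (metis matrix_mul_assoc)+
  then show ?thesis
    by (simp add: matrix_add_ldistrib matrix_add_rdistrib matrix_mul_assoc)
qed

lemma positive_definite2_factorization:
  fixes P :: "real^2^2"
  assumes sym: "transpose P = P" and pos: "P$1$1 > 0" "det P > 0"
  obtains A where "det A = 1" "P = sqrt (det P) *\<^sub>R (A ** transpose A)"
proof
  define a where "a = sqrt (det P)"
  define u where "u = sqrt (P$1$1 / a)"
  define v where "v = P$1$2 / (a * u)"
  define w where "w = 1 / u"
  define A where "A = mat2 u 0 v w"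
  have a: "a > 0" "a * a = det P" using pos by (auto simp: a_def)
  have u: "u > 0" "a * (u * u) = P$1$1" using pos a by (auto simp: u_def)
  have P21: "P$2$1 = P$1$2" using arg_cong[OF sym, of "\<lambda>X. X$1$2"] by (simp add: transpose_def)
  show "det A = 1" using u by (simp add: A_def w_def mat2_simps)
  have "a * (v * v + w * w) = (P$1$2 * P$1$2 + a * a) / (a * (u * u))"
    using a(1) u(1) by (simp add: v_def w_def field_simps)
  also have "\<dots> = P$2$2" using a pos P21 by (simp add: u det_2)
  finally have "a * (v * v + w * w) = P$2$2" .
  moreover have "a * (u * v) = P$1$2" using a u by (simp add: v_def)
  moreover have "a *\<^sub>R (A ** transpose A) = mat2 (a * (u * u)) (a * (u * v)) (a * (u * v)) (a * (v * v + w * w))"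
    by (simp add: A_def mat2_simps algebra_simps)
  ultimately show "P = a *\<^sub>R (A ** transpose A)"
    using u P21 by (simp add: mat2_simps)
qed

lemma rotation_to_Zdiag:
  obtains R :: "real^2^2" where "transpose R ** R = mat 1" "det R = 1"
    "R ** mat2 x y y (-x) = sqrt (x\<^sup>2 + y\<^sup>2) *\<^sub>R Zdiag"
proof (cases "x\<^sup>2 + y\<^sup>2 = 0")
  case True
  then have "x = 0" "y = 0" by (auto simp: sum_power2_eq_zero_iff)
  then show ?thesis by (intro that[of "mat 1"]) (simp_all add: mat2_simps Zdiag_def)
next
  case False
  define r where "r = sqrt (x\<^sup>2 + y\<^sup>2)"
  have r: "r > 0" "r\<^sup>2 = x\<^sup>2 + y\<^sup>2"
    using False by (auto simp: r_def add_nonneg_nonneg less_le)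
  have "(x / r)\<^sup>2 + (y / r)\<^sup>2 = (x\<^sup>2 + y\<^sup>2) / r\<^sup>2"
    by (simp add: power_divide add_divide_distrib)
  then have unit: "(x / r)\<^sup>2 + (y / r)\<^sup>2 = 1" using r(1) by (simp add: r(2)[symmetric])
  show ?thesis
  proof (rule that[of "mat2 (x/r) (y/r) (-y/r) (x/r)"])
    show "transpose (mat2 (x/r) (y/r) (-y/r) (x/r)) ** mat2 (x/r) (y/r) (-y/r) (x/r) = mat 1"
      "det (mat2 (x/r) (y/r) (-y/r) (x/r)) = 1"
      using unit by (simp_all add: mat2_simps power2_eq_square algebra_simps)
    show "mat2 (x/r) (y/r) (-y/r) (x/r) ** mat2 x y y (-x) = sqrt (x\<^sup>2 + y\<^sup>2) *\<^sub>R Zdiag"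
      unfolding r_def[symmetric] using r by (simp add: mat2_simps Zdiag_def field_simps power2_eq_square)
  qed
qed

lemma gram_blocks_reduction:
  fixes P Q C :: "real^2^2"
  assumes P: "transpose P = P" "P$1$1 > 0" "det P > 0"
    and Q: "transpose Q = Q" "Q$1$1 > 0" "det Q > 0"
    and e1: "P ** Omega1 ** P + C ** Omega1 ** transpose C = Omega1"
    and e2: "P ** Omega1 ** C + C ** Omega1 ** Q = 0"
    and e3: "transpose C ** Omega1 ** C + Q ** Omega1 ** Q = Omega1"
  obtains A0 B0 x y where "det A0 = 1" "det B0 = 1"
    "P = sqrt (1 + (x\<^sup>2 + y\<^sup>2)) *\<^sub>R (A0 ** transpose A0)"
    "Q = sqrt (1 + (x\<^sup>2 + y\<^sup>2)) *\<^sub>R (B0 ** transpose B0)"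
    "C = A0 ** mat2 x y y (-x) ** transpose B0"
proof -
  have detP: "det P + det C = 1" using det_add_det_eq_1[of P C] e1 P(1) by simp
  have "det (transpose C) + det Q = 1" using det_add_det_eq_1[of "transpose C" Q] e3 Q(1) by simp
  then have detQ: "det Q = det P" using detP by (simp add: det_transpose)
  define a where "a = sqrt (det P)"
  have a: "a > 0" using P(3) by (simp add: a_def)
  obtain A0 where A0: "det A0 = 1" "P = a *\<^sub>R (A0 ** transpose A0)"
    using positive_definite2_factorization[OF P] unfolding a_def .
  obtain B0 where B0: "det B0 = 1" "Q = a *\<^sub>R (B0 ** transpose B0)"
    using positive_definite2_factorization[OF Q] unfolding detQ a_def .
  define C1 where "C1 = adjugate2 A0 ** C ** transpose (adjugate2 B0)"
  have C: "C = A0 ** C1 ** transpose B0"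
  proof -
    have "A0 ** C1 ** transpose B0 = (A0 ** adjugate2 A0) ** C ** transpose (B0 ** adjugate2 B0)"
      by (simp add: C1_def matrix_mul_assoc matrix_transpose_mul)
    then show ?thesis using A0(1) B0(1) by (simp add: adjugate2_right)
  qed
  have "P ** Omega1 ** C + C ** Omega1 ** Q
      = a *\<^sub>R ((A0 ** transpose A0) ** Omega1 ** (A0 ** C1 ** transpose B0)
          + (A0 ** C1 ** transpose B0) ** Omega1 ** (B0 ** transpose B0))"
    unfolding A0(2) B0(2) C by (simp add: matrix_scaleR_left matrix_scaleR_right scaleR_right_distrib)
  also have "\<dots> = a *\<^sub>R (A0 ** (Omega1 ** C1 + C1 ** Omega1) ** transpose B0)"
    using symplectic_gram_sandwich[OF A0(1) B0(1)] by simp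
  finally have "A0 ** (Omega1 ** C1 + C1 ** Omega1) ** transpose B0 = 0" using e2 a by simp
  then have "C1 = mat2 (C1$1$1) (C1$1$2) (C1$1$2) (- C1$1$1)"
    using unimodular_sandwich_eq_0[OF A0(1) B0(1)] Omega1_anticommute by blast
  then obtain x y where C1: "C1 = mat2 x y y (-x)" by blast
  have "det C = - (x\<^sup>2 + y\<^sup>2)"
    unfolding C det_mul det_transpose A0(1) B0(1) C1 by (simp add: mat2_simps power2_eq_square)
  then have "a = sqrt (1 + (x\<^sup>2 + y\<^sup>2))" using detP by (simp add: a_def)
  with A0(2) B0(2) C show ?thesis unfolding C1 by (intro that[OF A0(1) B0(1)]) simp_all
qed

lemma gram_blocks_normal_form:
  fixes P Q C :: "real^2^2"
  assumes "transpose P = P" "P$1$1 > 0" "det P > 0"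
    and "transpose Q = Q" "Q$1$1 > 0" "det Q > 0"
    and "P ** Omega1 ** P + C ** Omega1 ** transpose C = Omega1"
    and "P ** Omega1 ** C + C ** Omega1 ** Q = 0"
    and "transpose C ** Omega1 ** C + Q ** Omega1 ** Q = Omega1"
  obtains A B G where "det A = 1" "det B = 1" "G \<ge> 1"
    "P = (2*G - 1) *\<^sub>R (A ** transpose A)" "Q = (2*G - 1) *\<^sub>R (B ** transpose B)"
    "C = (-2 * sqrt (G*(G - 1))) *\<^sub>R (A ** Zdiag ** transpose B)"
proof -
  obtain A0 B0 x y where A0: "det A0 = 1" and B0: "det B0 = 1"
    and P: "P = sqrt (1 + (x\<^sup>2 + y\<^sup>2)) *\<^sub>R (A0 ** transpose A0)"
    and Q: "Q = sqrt (1 + (x\<^sup>2 + y\<^sup>2)) *\<^sub>R (B0 ** transpose B0)"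
    and C: "C = A0 ** mat2 x y y (-x) ** transpose B0"
    using gram_blocks_reduction[OF assms] .
  obtain R where R: "transpose R ** R = mat 1" "det R = 1"
    "R ** mat2 x y y (-x) = sqrt (x\<^sup>2 + y\<^sup>2) *\<^sub>R Zdiag"
    by (rule rotation_to_Zdiag)
  define \<rho> where "\<rho> = sqrt (x\<^sup>2 + y\<^sup>2)"
  \<comment> \<open>the diagonal blocks of S_G^-2 carry 2G - 1 = sqrt (1 + \<rho>^2),
    the off-diagonal ones 2 sqrt (G(G - 1)) = \<rho>\<close>
  define G where "G = (sqrt (1 + \<rho>\<^sup>2) + 1) / 2"
  have \<rho>: "\<rho> \<ge> 0" "\<rho>\<^sup>2 = x\<^sup>2 + y\<^sup>2" by (simp_all add: \<rho>_def)
  have G2: "2*G - 1 = sqrt (1 + (x\<^sup>2 + y\<^sup>2))" by (simp add: G_def \<rho> field_simps)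
  moreover have "1 \<le> sqrt (1 + (x\<^sup>2 + y\<^sup>2))" by simp
  ultimately have "G \<ge> 1" by linarith
  have "G * (G - 1) = (\<rho> / 2)\<^sup>2"
    by (simp add: G_def field_simps power2_eq_square)
  then have "2 * sqrt (G*(G - 1)) = \<rho>" using \<rho>(1) by simp
  note G = \<open>G \<ge> 1\<close> G2 this
  show ?thesis
  proof (rule that[of "A0 ** transpose R" "- B0" G])
    show "det (A0 ** transpose R) = 1" using A0 R by (simp add: det_mul det_transpose)
    show "det (- B0) = 1" using B0 by (simp add: det_2)
    show "G \<ge> 1" by (fact G(1))
    have "A0 ** transpose R ** transpose (A0 ** transpose R) = A0 ** (transpose R ** R) ** transpose A0"
      by (simp add: matrix_transpose_mul matrix_mul_assoc)
    then show "P = (2*G - 1) *\<^sub>R (A0 ** transpose R ** transpose (A0 ** transpose R))"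
      using P R(1) G(2) by simp
    show "Q = (2*G - 1) *\<^sub>R (- B0 ** transpose (- B0))"
      using Q G(2) by (simp add: transpose_uminus matrix_mult_uminus_left matrix_mult_uminus_right)
    have "C = A0 ** (transpose R ** R) ** mat2 x y y (-x) ** transpose B0" using C R(1) by simp
    also have "\<dots> = A0 ** transpose R ** (R ** mat2 x y y (-x)) ** transpose B0"
      by (simp add: matrix_mul_assoc)
    also have "\<dots> = \<rho> *\<^sub>R (A0 ** transpose R ** Zdiag ** transpose B0)"
      unfolding R(3) \<rho>_def by (simp add: matrix_scaleR_right matrix_scaleR_left)
    finally show "C = (-2 * sqrt (G*(G - 1))) *\<^sub>R (A0 ** transpose R ** Zdiag ** transpose (- B0))"
      using G(3) by (simp add: transpose_uminus matrix_mult_uminus_right)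
  qed
qed

definition block_index :: "4 \<Rightarrow> 2" where "block_index i = (if i = 1 \<or> i = 3 then 1 else 2)"

definition upper_index :: "4 \<Rightarrow> bool" where "upper_index i \<longleftrightarrow> i = 1 \<or> i = 2"

definition block4 :: "real^2^2 \<Rightarrow> real^2^2 \<Rightarrow> real^2^2 \<Rightarrow> real^2^2 \<Rightarrow> real^4^4" where
  "block4 P Q R S = (\<chi> i j.
     if upper_index i then (if upper_index j then P else Q) $ block_index i $ block_index j
     else (if upper_index j then R else S) $ block_index i $ block_index j)"

lemmas block4_simps = vec_eq_iff forall_4 forall_2 matrix_matrix_mult_def sum_4 sum_2
  transpose_def mat_def block4_def block_index_def upper_index_def

lemma block4_mult:
  "block4 P Q R S ** block4 P' Q' R' S' =
   block4 (P ** P' + Q ** R') (P ** Q' + Q ** S') (R ** P' + S ** R') (R ** Q' + S ** S')"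
  by (simp add: block4_simps algebra_simps)

lemma block4_transpose:
  "transpose (block4 P Q R S) = block4 (transpose P) (transpose R) (transpose Q) (transpose S)"
  by (simp add: block4_simps)

lemma block4_eq_iff:
  "block4 P Q R S = block4 P' Q' R' S' \<longleftrightarrow> P = P' \<and> Q = Q' \<and> R = R' \<and> S = S'"
  by (auto simp add: block4_simps)

lemma block4_cases:
  obtains P Q R S where "X = block4 P Q R S"
proof
  let ?sub = "\<lambda>a b. \<chi> i j. X $ (if i = 1 then a else a + 1) $ (if j = 1 then b else b + 1)"
  show "X = block4 (?sub 1 1) (?sub 1 3) (?sub 3 1) (?sub 3 3)"
    by (simp add: block4_simps)
qed

lemma mat1_block4: "mat 1 = block4 (mat 1) 0 0 (mat 1)"
  by (simp add: block4_simps)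

lemma Omega2_block4: "Omega2 = block4 Omega1 0 0 Omega1"
  by (simp add: block4_simps Omega2_def mat4_def idx4_def Omega1_def mat2_def vec2_def)

lemma S_TMS_block4:
  "S_TMS G = block4 (sqrt G *\<^sub>R mat 1) (sqrt (G - 1) *\<^sub>R Zdiag)
                    (sqrt (G - 1) *\<^sub>R Zdiag) (sqrt G *\<^sub>R mat 1)"
  by (simp add: block4_simps S_TMS_def mat4_def idx4_def Zdiag_def mat2_def vec2_def)

lemma data_part_block4_mult: "data_part (block4 P Q R S *v x) = P *v data_part x + Q *v anc_part x"
  by (simp add: block4_simps data_part_def anc_part_def vec2_def matrix_vector_mult_def)

lemma anc_part_block4_mult: "anc_part (block4 P Q R S *v x) = R *v data_part x + S *v anc_part x"
  by (simp add: block4_simps data_part_def anc_part_def vec2_def matrix_vector_mult_def)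

section \<open>Decomposition of two-mode symplectic matrices\<close>

lemma Omega2_squared: "Omega2 ** Omega2 = - mat 1"
  by (simp add: Omega2_block4 block4_mult Omega1_squared) (simp add: block4_simps)

lemma symplectic4_right_inverse:
  assumes "symplectic4 S"
  shows "S ** (- (Omega2 ** transpose S ** Omega2)) = mat 1"
proof -
  have "S ** (- (Omega2 ** transpose S ** Omega2)) = - ((S ** Omega2 ** transpose S) ** Omega2)"
    by (simp add: matrix_mult_uminus_right matrix_mul_assoc)
  then show ?thesis using assms by (simp add: symplectic4_def Omega2_squared)
qed

lemma symplectic4_transpose:
  assumes "symplectic4 S"
  shows "symplectic4 (transpose S)"
proof -
  have "- (Omega2 ** transpose S ** Omega2) ** S = mat 1"
    using symplectic4_right_inverse[OF assms] matrix_left_right_inverse by blast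
  then have left_inv: "(Omega2 ** transpose S ** Omega2) ** S = - mat 1"
    by (simp add: matrix_mult_uminus_left minus_equation_iff)
  have "- (transpose S ** Omega2 ** S) = (Omega2 ** Omega2) ** (transpose S ** Omega2 ** S)"
    by (simp add: Omega2_squared matrix_mult_uminus_left)
  also have "\<dots> = Omega2 ** ((Omega2 ** transpose S ** Omega2) ** S)"
    by (simp add: matrix_mul_assoc)
  also have "\<dots> = - Omega2" using left_inv by (simp add: matrix_mult_uminus_right)
  finally show ?thesis by (simp add: symplectic4_def)
qed

lemma symplectic4_matrix_inv:
  assumes "symplectic4 S"
  shows "symplectic4 (matrix_inv S)"
proof -
  have "matrix_inv S = - (Omega2 ** transpose S ** Omega2)"
    by (rule matrix_inv_eqI[OF symplectic4_right_inverse[OF assms]])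
  then have inv: "matrix_inv S ** S = mat 1"
    using symplectic4_right_inverse[OF assms] matrix_left_right_inverse by metis
  have "matrix_inv S ** Omega2 ** transpose (matrix_inv S)
      = matrix_inv S ** (S ** Omega2 ** transpose S) ** transpose (matrix_inv S)"
    using assms by (simp add: symplectic4_def)
  also have "\<dots> = (matrix_inv S ** S) ** Omega2 ** transpose (matrix_inv S ** S)"
    by (simp add: matrix_mul_assoc matrix_transpose_mul)
  finally show ?thesis using inv by (simp add: symplectic4_def)
qed

lemma gram_block_positive:
  fixes T1 T2 :: "real^2^2"
  assumes "T1 ** Omega1 ** transpose T1 + T2 ** Omega1 ** transpose T2 = Omega1"
  defines "P \<equiv> T1 ** transpose T1 + T2 ** transpose T2"
  shows "transpose P = P" "P$1$1 > 0" "det P > 0"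
proof -
  have "det T1 + det T2 = 1" by (rule det_add_det_eq_1[OF assms(1)])
  then have "(det T1)\<^sup>2 + (det T2)\<^sup>2 > 0" by (auto simp: sum_power2_gt_zero_iff)
  \<comment> \<open>Cauchy--Binet for the Gram matrix of the 2 \<times> 4 matrix (T1 T2)\<close>
  moreover have "det P = (det T1)\<^sup>2 + (det T2)\<^sup>2 + (T1$1$1 * T2$2$1 - T2$1$1 * T1$2$1)\<^sup>2
     + (T1$1$1 * T2$2$2 - T2$1$2 * T1$2$1)\<^sup>2 + (T1$1$2 * T2$2$1 - T2$1$1 * T1$2$2)\<^sup>2
     + (T1$1$2 * T2$2$2 - T2$1$2 * T1$2$2)\<^sup>2"
    by (simp add: P_def mat2_simps power2_eq_square algebra_simps)
  ultimately show detP: "det P > 0"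
    by (smt (verit) zero_le_power2)
  show "transpose P = P" by (simp add: P_def mat2_simps algebra_simps)
  have "P$2$1 = P$1$2" "P$1$1 \<ge> 0" by (simp_all add: P_def mat2_simps algebra_simps)
  moreover have "P$1$1 \<noteq> 0"
  proof
    assume "P$1$1 = 0"
    then have "det P = - (P$1$2 * P$2$1)" by (simp add: det_2)
    then show False using detP \<open>P$2$1 = P$1$2\<close> by (smt (verit) zero_le_square)
  qed
  ultimately show "P$1$1 > 0" by simp
qed

lemma symplectic4_gram_blocks:
  assumes "symplectic4 T"
  obtains P C Q where "T ** transpose T = block4 P C (transpose C) Q"
    "transpose P = P" "P$1$1 > 0" "det P > 0" "transpose Q = Q" "Q$1$1 > 0" "det Q > 0"
    "P ** Omega1 ** P + C ** Omega1 ** transpose C = Omega1"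
    "P ** Omega1 ** C + C ** Omega1 ** Q = 0"
    "transpose C ** Omega1 ** C + Q ** Omega1 ** Q = Omega1"
proof -
  obtain T1 T2 T3 T4 where T: "T = block4 T1 T2 T3 T4" by (rule block4_cases)
  define P where "P = T1 ** transpose T1 + T2 ** transpose T2"
  define Q where "Q = T3 ** transpose T3 + T4 ** transpose T4"
  define C where "C = T1 ** transpose T3 + T2 ** transpose T4"
  have gram: "T ** transpose T = block4 P C (transpose C) Q"
    unfolding T block4_transpose block4_mult P_def Q_def C_def
    by (simp add: matrix_transpose_mul transpose_add)
  have "T ** Omega2 ** transpose T = Omega2" using assms by (simp add: symplectic4_def)
  then have "T1 ** Omega1 ** transpose T1 + T2 ** Omega1 ** transpose T2 = Omega1"
    "T3 ** Omega1 ** transpose T3 + T4 ** Omega1 ** transpose T4 = Omega1"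
    by (simp_all add: T Omega2_block4 block4_transpose block4_mult block4_eq_iff)
  note P = gram_block_positive(1-3)[OF this(1), folded P_def]
    and Q = gram_block_positive(1-3)[OF this(2), folded Q_def]
  have "(T ** transpose T) ** Omega2 ** (T ** transpose T) = T ** (transpose T ** Omega2 ** T) ** transpose T"
    by (simp add: matrix_mul_assoc)
  also have "\<dots> = Omega2"
    using assms symplectic4_transpose[OF assms] by (simp add: symplectic4_def)
  finally show ?thesis
    using that[OF gram P Q] by (simp add: gram Omega2_block4 block4_mult block4_eq_iff)
qed

lemma S_TMS_matrix_inv:
  assumes "G \<ge> 1"
  shows "matrix_inv (S_TMS G) =
    block4 (sqrt G *\<^sub>R mat 1) ((- sqrt (G - 1)) *\<^sub>R Zdiag)
           ((- sqrt (G - 1)) *\<^sub>R Zdiag) (sqrt G *\<^sub>R mat 1)"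
    (is "_ = ?Si")
    and "S_TMS G ** matrix_inv (S_TMS G) = mat 1"
proof -
  have "sqrt G * sqrt G = G" "sqrt (G - 1) * sqrt (G - 1) = G - 1" using assms by simp_all
  then have right: "S_TMS G ** ?Si = mat 1"
    unfolding S_TMS_block4 block4_mult mat1_block4 block4_eq_iff
    by (simp add: mat2_simps Zdiag_def algebra_simps)
  then show inv: "matrix_inv (S_TMS G) = ?Si" by (rule matrix_inv_eqI)
  show "S_TMS G ** matrix_inv (S_TMS G) = mat 1" using right inv by simp
qed

lemma S_TMS_inverse_gram:
  assumes "G \<ge> 1"
  shows "matrix_inv (S_TMS G) ** transpose (matrix_inv (S_TMS G)) =
    block4 ((2*G - 1) *\<^sub>R mat 1) ((-2 * sqrt (G*(G - 1))) *\<^sub>R Zdiag)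
           ((-2 * sqrt (G*(G - 1))) *\<^sub>R Zdiag) ((2*G - 1) *\<^sub>R mat 1)"
proof -
  have "sqrt G * sqrt G = G" "sqrt (G - 1) * sqrt (G - 1) = G - 1"
    "sqrt (G * (G - 1)) = sqrt G * sqrt (G - 1)"
    using assms by (simp_all add: real_sqrt_mult)
  then show ?thesis
    unfolding S_TMS_matrix_inv(1)[OF assms] block4_transpose block4_mult block4_eq_iff
    by (simp add: mat2_simps Zdiag_def algebra_simps)
qed

lemma symplectic4_gram_normal_form:
  assumes "symplectic4 T"
  obtains A B G where "det A = 1" "det B = 1" "G \<ge> 1"
    "T ** transpose T = (block4 A 0 0 B ** matrix_inv (S_TMS G))
                        ** transpose (block4 A 0 0 B ** matrix_inv (S_TMS G))"
proof -
  obtain P C Q where gram: "T ** transpose T = block4 P C (transpose C) Q"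
    and blocks: "transpose P = P" "P$1$1 > 0" "det P > 0" "transpose Q = Q" "Q$1$1 > 0" "det Q > 0"
      "P ** Omega1 ** P + C ** Omega1 ** transpose C = Omega1"
      "P ** Omega1 ** C + C ** Omega1 ** Q = 0"
      "transpose C ** Omega1 ** C + Q ** Omega1 ** Q = Omega1"
    by (rule symplectic4_gram_blocks[OF assms])
  obtain A B G where AB: "det A = 1" "det B = 1" and G: "G \<ge> 1"
    and P: "P = (2*G - 1) *\<^sub>R (A ** transpose A)" and Q: "Q = (2*G - 1) *\<^sub>R (B ** transpose B)"
    and C: "C = (-2 * sqrt (G*(G - 1))) *\<^sub>R (A ** Zdiag ** transpose B)"
    by (rule gram_blocks_normal_form[OF blocks])
  let ?K = "block4 A 0 0 B ** matrix_inv (S_TMS G)"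
  have "?K ** transpose ?K = block4 A 0 0 B **
      (matrix_inv (S_TMS G) ** transpose (matrix_inv (S_TMS G))) ** transpose (block4 A 0 0 B)"
    by (simp add: matrix_transpose_mul matrix_mul_assoc)
  also have "\<dots> = T ** transpose T"
    unfolding S_TMS_inverse_gram[OF G] block4_transpose block4_mult gram P Q C
    by (simp add: matrix_scaleR_left matrix_scaleR_right transpose_scalar matrix_transpose_mul
        transpose_Zdiag matrix_mul_assoc matrix_mult_uminus_left matrix_mult_uminus_right
        transpose_uminus)
  finally show ?thesis using that[OF AB G] by simp
qed

lemma symplectic4_decomposition:
  assumes "symplectic4 S"
  obtains A B G U where "det A = 1" "det B = 1" "G \<ge> 1" "transpose U ** U = mat 1"
    "matrix_inv S = block4 A 0 0 B ** matrix_inv (S_TMS G) ** U"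
proof -
  obtain A B G where AB: "det A = 1" "det B = 1" and G: "G \<ge> 1"
    and gram: "matrix_inv S ** transpose (matrix_inv S) =
      (block4 A 0 0 B ** matrix_inv (S_TMS G)) ** transpose (block4 A 0 0 B ** matrix_inv (S_TMS G))"
    by (rule symplectic4_gram_normal_form[OF symplectic4_matrix_inv[OF assms]])
  define K where "K = block4 A 0 0 B ** matrix_inv (S_TMS G)"
  define L where "L = S_TMS G ** block4 (adjugate2 A) 0 0 (adjugate2 B)"
  have "block4 (adjugate2 A) 0 0 (adjugate2 B) ** block4 A 0 0 B = mat 1"
    using AB by (simp add: block4_mult adjugate2_left flip: mat1_block4)
  then have "L ** K = S_TMS G ** matrix_inv (S_TMS G)"
    unfolding L_def K_def by (metis matrix_mul_assoc matrix_mul_lid)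
  also have "\<dots> = mat 1" by (rule S_TMS_matrix_inv(2)[OF G])
  finally have LK: "L ** K = mat 1" .
  note U = orthogonal_factor_of_gram[OF gram[folded K_def] LK]
  show ?thesis
  proof (rule that[OF AB G U(1)])
    show "matrix_inv S = block4 A 0 0 B ** matrix_inv (S_TMS G) ** (L ** matrix_inv S)"
      using U(2) by (simp add: K_def)
  qed
qed

section \<open>Measurability and rotation invariance of the noise\<close>

lemma borel_measurable_vec_nth [measurable]: "(\<lambda>x::real^'n. x $ i) \<in> borel_measurable borel"
  by (intro borel_measurable_continuous_onI continuous_intros)

lemma borel_measurable_vec_lambda [measurable]:
  fixes f :: "'a \<Rightarrow> 'n::finite \<Rightarrow> real"
  assumes [measurable]: "\<And>i. (\<lambda>x. f x i) \<in> borel_measurable M"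
  shows "(\<lambda>x. \<chi> i. f x i) \<in> borel_measurable M"
proof (subst borel_measurable_euclidean_space, intro ballI)
  fix b :: "real^'n" assume "b \<in> Basis"
  then obtain i where b: "b = axis i 1" by (auto simp: Basis_vec_def)
  have "(\<lambda>x. (\<chi> i. f x i) \<bullet> b) = (\<lambda>x. f x i)" unfolding b by (simp add: inner_axis)
  then show "(\<lambda>x. (\<chi> i. f x i) \<bullet> b) \<in> borel_measurable M" by simp
qed

lemma borel_measurable_matrix_vector_mult [measurable]:
  "(\<lambda>x. (A::real^'n^'m) *v x) \<in> borel_measurable borel"
  by (intro borel_measurable_continuous_onI linear_continuous_on) simp

lemma borel_measurable_R_sqrt2pi [measurable]: "R_sqrt2pi \<in> borel_measurable borel"
  unfolding R_sqrt2pi_def modred_def by measurable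

lemma borel_measurable_data_part [measurable]: "data_part \<in> borel_measurable borel"
  unfolding data_part_def vec2_def by measurable

lemma borel_measurable_anc_part [measurable]: "anc_part \<in> borel_measurable borel"
  unfolding anc_part_def vec2_def by measurable

lemma borel_measurable_residual [measurable]:
  assumes [measurable]: "f \<in> borel_measurable borel"
  shows "residual Senc M f \<in> borel_measurable borel"
  unfolding residual_def Let_def by measurable

lemma orthogonal_transformation_matrix_vector_mult:
  fixes U :: "real^'n^'n"
  assumes "transpose U ** U = mat 1"
  shows "orthogonal_transformation (\<lambda>x. U *v x)"
  using assms by (simp add: orthogonal_transformation_matrix orthogonal_matrix)

lemma lborel_distr_orthogonal_transformation:
  fixes f :: "real^'n::{finite,wellorder} \<Rightarrow> real^'n::{finite,wellorder}"
  assumes f: "orthogonal_transformation f"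
  shows "distr lborel borel f = lborel"
proof (rule lborel_eqI[symmetric])
  have f_borel: "f \<in> borel_measurable borel"
    using f by (intro borel_measurable_continuous_onI linear_continuous_on)
      (simp add: orthogonal_transformation_linear linear_linear)
  fix l u :: "real^'n::{finite,wellorder}"
  assume le: "\<And>b. b \<in> Basis \<Longrightarrow> l \<bullet> b \<le> u \<bullet> b"
  have box: "box l u \<in> lmeasurable"
    using emeasure_lborel_box_finite[of l u] by (intro fmeasurableI) auto
  have "emeasure (distr lborel borel f) (box l u) = emeasure lborel (f -` box l u)"
    using f_borel by (simp add: emeasure_distr)
  also have "\<dots> = emeasure lebesgue (inv f ` box l u)"
    using measurable_sets[OF f_borel, of "box l u"] f
    by (simp add: bij_vimage_eq_inv_image orthogonal_transformation_bij)
  also have "\<dots> = measure lebesgue (box l u)"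
    using measurable_orthogonal_image[OF orthogonal_transformation_inv[OF f] box]
      measure_orthogonal_image[OF orthogonal_transformation_inv[OF f] box]
    by (simp add: emeasure_eq_measure2)
  also have "\<dots> = emeasure lborel (box l u)" using box by (simp add: emeasure_eq_measure2)
  finally show "emeasure (distr lborel borel f) (box l u) = (\<Prod>b\<in>Basis. (u - l) \<bullet> b)"
    using le by (simp add: emeasure_lborel_box_eq)
qed simp

lemma prod_normal_density_eq:
  "(\<Prod>i\<in>UNIV. normal_density 0 \<sigma> ((x::real^'n) $ i)) =
   (1 / sqrt (2 * pi * \<sigma>\<^sup>2)) ^ CARD('n) * exp (- (x \<bullet> x) / (2 * \<sigma>\<^sup>2))"
proof -
  have "(\<Prod>i\<in>UNIV. normal_density 0 \<sigma> (x $ i))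
      = (\<Prod>i\<in>UNIV. 1 / sqrt (2 * pi * \<sigma>\<^sup>2) * exp (- (x $ i)\<^sup>2 / (2 * \<sigma>\<^sup>2)))"
    by (simp add: normal_density_def)
  also have "\<dots> = (1 / sqrt (2 * pi * \<sigma>\<^sup>2)) ^ CARD('n) * exp (\<Sum>i\<in>UNIV. - (x $ i)\<^sup>2 / (2 * \<sigma>\<^sup>2))"
    unfolding prod.distrib prod_constant by (simp add: exp_sum)
  also have "(\<Sum>i\<in>UNIV. - (x $ i)\<^sup>2 / (2 * \<sigma>\<^sup>2)) = - (x \<bullet> x) / (2 * \<sigma>\<^sup>2)"
    by (simp add: inner_vec_def power2_eq_square sum_divide_distrib[symmetric] sum_negf)
  finally show ?thesis .
qed

lemma sets_gauss4 [simp]: "sets (gauss4 \<sigma>) = sets borel"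
  by (simp add: gauss4_def)

lemma measurable_gauss4 [simp]:
  "measurable (gauss4 \<sigma>) N = measurable borel N" "measurable N (gauss4 \<sigma>) = measurable N borel"
  by (rule measurable_cong_sets; simp)+

lemma gauss4_distr_orthogonal_transformation:
  assumes f: "orthogonal_transformation f"
  shows "distr (gauss4 \<sigma>) borel f = gauss4 \<sigma>"
proof -
  define \<rho> where "\<rho> = (\<lambda>x::real^4. ennreal (\<Prod>i\<in>UNIV. normal_density 0 \<sigma> (x $ i)))"
  have [measurable]: "\<rho> \<in> borel_measurable borel" "f \<in> borel_measurable borel"
    using f by (auto simp: \<rho>_def orthogonal_transformation_linear linear_linear
        intro!: borel_measurable_continuous_onI linear_continuous_on)
  have "\<rho> (f x) = \<rho> x" for x
    using f by (simp add: \<rho>_def prod_normal_density_eq orthogonal_transformation_def)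
  then have "distr (gauss4 \<sigma>) borel f = distr (density lborel (\<lambda>x. \<rho> (f x))) borel f"
    by (simp add: gauss4_def \<rho>_def)
  also have "\<dots> = density (distr lborel borel f) \<rho>" by (simp add: density_distr)
  also have "\<dots> = gauss4 \<sigma>"
    by (simp add: lborel_distr_orthogonal_transformation[OF f] gauss4_def \<rho>_def)
  finally show ?thesis .
qed

definition square_integrable_vec :: "'a measure \<Rightarrow> ('a \<Rightarrow> real^'n) \<Rightarrow> bool" where
  "square_integrable_vec M w \<longleftrightarrow> (\<forall>i. integrable M (\<lambda>x. (w x $ i)\<^sup>2))"

definition second_moment :: "'a measure \<Rightarrow> ('a \<Rightarrow> real^'n) \<Rightarrow> real^'n^'n" where
  "second_moment M w = (\<chi> i j. \<integral>x. w x $ i * w x $ j \<partial>M)"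

definition gm_error_of :: "'a measure \<Rightarrow> ('a \<Rightarrow> real^'n) \<Rightarrow> ereal" where
  "gm_error_of M w =
     (if square_integrable_vec M w then ereal (sqrt (det (second_moment M w))) else \<infinity>)"

lemma gm_error_eq_gm_error_of: "gm_error \<sigma> S M f = gm_error_of (gauss4 \<sigma>) (residual S M f)"
  by (simp add: gm_error_def gm_error_of_def square_integrable_vec_def second_moment_def V_out_def)

lemma integrable_component_product:
  assumes [measurable]: "w \<in> borel_measurable M" and "square_integrable_vec M w"
  shows "integrable M (\<lambda>x. w x $ i * w x $ j)"
proof (rule Bochner_Integration.integrable_bound)
  show "integrable M (\<lambda>x. (w x $ i)\<^sup>2 + (w x $ j)\<^sup>2)"
    using assms(2) by (auto simp: square_integrable_vec_def)
  show "AE x in M. norm (w x $ i * w x $ j) \<le> norm ((w x $ i)\<^sup>2 + (w x $ j)\<^sup>2)"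
  proof (intro AE_I2)
    fix x
    have "2 * \<bar>w x $ i\<bar> * \<bar>w x $ j\<bar> \<le> (w x $ i)\<^sup>2 + (w x $ j)\<^sup>2"
      using sum_squares_bound[of "\<bar>w x $ i\<bar>" "\<bar>w x $ j\<bar>"] by simp
    moreover have "norm (w x $ i * w x $ j) = \<bar>w x $ i\<bar> * \<bar>w x $ j\<bar>"
      "norm ((w x $ i)\<^sup>2 + (w x $ j)\<^sup>2) = (w x $ i)\<^sup>2 + (w x $ j)\<^sup>2"
      by (simp_all add: abs_mult)
    moreover have "0 \<le> \<bar>w x $ i\<bar> * \<bar>w x $ j\<bar>" by simp
    ultimately show "norm (w x $ i * w x $ j) \<le> norm ((w x $ i)\<^sup>2 + (w x $ j)\<^sup>2)"
      by linarith
  qed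
qed measurable

lemma component_product_matrix_vector_mult:
  fixes K :: "real^'n^'m"
  shows "(K *v v) $ i * (K *v v) $ j = (\<Sum>k\<in>UNIV. \<Sum>l\<in>UNIV. K$i$k * K$j$l * (v$k * v$l))"
  by (simp add: matrix_vector_mult_def sum_product) (intro sum.cong refl, simp add: mult_ac)

lemma second_moment_matrix_vector_mult:
  fixes K :: "real^'n^'m"
  assumes [measurable]: "w \<in> borel_measurable M" and sq: "square_integrable_vec M w"
  shows "square_integrable_vec M (\<lambda>x. K *v w x)"
    and "second_moment M (\<lambda>x. K *v w x) = K ** second_moment M w ** transpose K"
proof -
  note int = integrable_component_product[OF assms]
  have int': "integrable M (\<lambda>x. (K *v w x) $ i * (K *v w x) $ j)" for i j
    unfolding component_product_matrix_vector_mult using int by simp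
  then show "square_integrable_vec M (\<lambda>x. K *v w x)"
    by (simp add: square_integrable_vec_def power2_eq_square)
  have "(\<integral>x. (K *v w x) $ i * (K *v w x) $ j \<partial>M)
      = (\<Sum>k\<in>UNIV. \<Sum>l\<in>UNIV. K$i$k * K$j$l * second_moment M w $ k $ l)" for i j
    unfolding component_product_matrix_vector_mult using int by (simp add: second_moment_def)
  moreover have "(K ** V ** transpose K) $ i $ j = (\<Sum>k\<in>UNIV. \<Sum>l\<in>UNIV. K$i$k * K$j$l * V$k$l)"
    for V :: "real^'n^'n" and i j
    by (simp add: matrix_matrix_mult_def transpose_def sum_distrib_right)
      (subst sum.swap, intro sum.cong refl, simp add: mult_ac)
  ultimately show "second_moment M (\<lambda>x. K *v w x) = K ** second_moment M w ** transpose K"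
    by (simp add: second_moment_def[of M "\<lambda>x. K *v w x"] vec_eq_iff)
qed

lemma gm_error_of_unimodular:
  fixes K :: "real^'n^'n"
  assumes "det K = 1" and [measurable]: "w \<in> borel_measurable M"
  shows "gm_error_of M (\<lambda>x. K *v w x) = gm_error_of M w"
proof -
  have "invertible K" using assms(1) by (simp add: invertible_det_nz)
  then obtain L where L: "L ** K = mat 1" using invertible_left_inverse by blast
  have "w = (\<lambda>x. L *v (K *v w x))" by (simp add: matrix_vector_mul_assoc L)
  then have "square_integrable_vec M (\<lambda>x. K *v w x) \<longleftrightarrow> square_integrable_vec M w"
    using second_moment_matrix_vector_mult(1)[of "\<lambda>x. K *v w x" M L]
      second_moment_matrix_vector_mult(1)[of w M K] by auto
  then show ?thesis
    using second_moment_matrix_vector_mult(2)[of w M K] assms(1)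
    by (simp add: gm_error_of_def det_mul det_transpose)
qed

lemma gm_error_of_distr:
  assumes h: "h \<in> measurable M N" and distr: "distr M N h = N"
    and [measurable]: "w \<in> borel_measurable N"
  shows "gm_error_of M (\<lambda>x. w (h x)) = gm_error_of N w"
proof -
  have [measurable]: "(\<lambda>y. w y $ i * w y $ j) \<in> borel_measurable N" for i j by measurable
  note int = integrable_distr_eq[OF h this, unfolded distr]
    and eq = integral_distr[OF h this, unfolded distr]
  have "square_integrable_vec M (\<lambda>x. w (h x)) \<longleftrightarrow> square_integrable_vec N w"
    using int by (simp add: square_integrable_vec_def power2_eq_square)
  moreover have "second_moment M (\<lambda>x. w (h x)) = second_moment N w"
    using eq by (simp add: second_moment_def)
  ultimately show ?thesis by (simp add: gm_error_of_def)
qed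

section \<open>Reduction to two-mode squeezing codes\<close>

lemma residual_local_decomposition:
  assumes dec: "matrix_inv Senc = block4 A 0 0 B ** matrix_inv (S_TMS G) ** U" and "det A = 1"
  shows "residual Senc M f \<xi> =
    A *v residual (S_TMS G) (adjugate2 B ** M) (\<lambda>s. adjugate2 A *v f s) (U *v \<xi>)"
proof -
  define y where "y = matrix_inv (S_TMS G) *v (U *v \<xi>)"
  have x: "matrix_inv Senc *v \<xi> = block4 A 0 0 B *v y"
    unfolding dec y_def by (simp add: matrix_vector_mul_assoc matrix_mul_assoc)
  have "transpose (adjugate2 B ** M) ** Omega1 = transpose M ** (transpose (adjugate2 B) ** Omega1)"
    by (simp add: matrix_transpose_mul matrix_mul_assoc)
  then have syndrome: "(transpose M ** Omega1) *v (B *v v) = (transpose (adjugate2 B ** M) ** Omega1) *v v" for v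
    by (simp add: transpose_adjugate2_Omega1 matrix_vector_mul_assoc matrix_mul_assoc)
  have "A *v (adjugate2 A *v v) = v" for v
    using assms(2) by (simp add: matrix_vector_mul_assoc adjugate2_right)
  then show ?thesis
    unfolding residual_def Let_def x data_part_block4_mult anc_part_block4_mult y_def[symmetric]
    by (simp add: syndrome matrix_vector_mult_diff_distrib)
qed

lemma canonical_lattice_eq_symplectic_square_lattice:
  assumes "det N = 2*pi"
  obtains \<Lambda> where "symplectic2 \<Lambda>" "N = sqrt (2*pi) *\<^sub>R (\<Lambda> ** Omega1)"
proof
  define \<Lambda> where "\<Lambda> = (1 / sqrt (2*pi)) *\<^sub>R (N ** (- Omega1))"
  have "det (- Omega1) = 1" by (simp add: mat2_simps)
  then show "symplectic2 \<Lambda>"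
    using assms by (simp add: symplectic2_iff_det \<Lambda>_def det_scaleR2 det_mul power_divide)
  show "N = sqrt (2*pi) *\<^sub>R (\<Lambda> ** Omega1)"
    by (simp add: \<Lambda>_def matrix_scaleR_left matrix_mult_uminus_right matrix_mult_uminus_left
        flip: matrix_mul_assoc) (simp add: matrix_mul_assoc Omega1_squared matrix_mult_uminus_right)
qed

theorem theorem4:
  fixes \<sigma> :: real and Senc :: "real^4^4" and M :: "real^2^2" and f :: "real^2 \<Rightarrow> real^2"
  assumes "\<sigma> > 0"
    and "symplectic4 Senc"
    and "invertible M"
    and "f \<in> borel_measurable borel"
    and "transpose M ** Omega1 ** M = (2*pi) *\<^sub>R Omega1"
  shows "\<exists>G \<Lambda> (f' :: real^2 \<Rightarrow> real^2). G \<ge> 1 \<and> symplectic2 \<Lambda> \<and> f' \<in> borel_measurable borel \<and>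
           gm_error \<sigma> (S_TMS G) (sqrt (2*pi) *\<^sub>R (\<Lambda> ** Omega1)) f' = gm_error \<sigma> Senc M f"
proof -
  obtain A B G U where A: "det A = 1" and B: "det B = 1" and G: "G \<ge> 1"
    and U: "transpose U ** U = mat 1"
    and dec: "matrix_inv Senc = block4 A 0 0 B ** matrix_inv (S_TMS G) ** U"
    by (rule symplectic4_decomposition[OF assms(2)])
  have "det (adjugate2 B ** M) = 2*pi"
    using assms(5) B by (simp add: Omega1_congruence_eq_iff_det det_mul)
  then obtain \<Lambda> where \<Lambda>: "symplectic2 \<Lambda>" "adjugate2 B ** M = sqrt (2*pi) *\<^sub>R (\<Lambda> ** Omega1)"
    by (rule canonical_lattice_eq_symplectic_square_lattice)
  define f' where "f' = (\<lambda>s. adjugate2 A *v f s)"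
  have f'[measurable]: "f' \<in> borel_measurable borel" using assms(4) by (simp add: f'_def)
  have "residual Senc M f = (\<lambda>\<xi>. A *v residual (S_TMS G) (adjugate2 B ** M) f' (U *v \<xi>))"
    using residual_local_decomposition[OF dec A] by (auto simp: f'_def)
  then have "gm_error \<sigma> Senc M f
      = gm_error_of (gauss4 \<sigma>) (\<lambda>\<xi>. A *v residual (S_TMS G) (adjugate2 B ** M) f' (U *v \<xi>))"
    by (simp add: gm_error_eq_gm_error_of)
  also have "\<dots> = gm_error_of (gauss4 \<sigma>) (\<lambda>\<xi>. residual (S_TMS G) (adjugate2 B ** M) f' (U *v \<xi>))"
    using A by (intro gm_error_of_unimodular) simp_all
  also have "\<dots> = gm_error \<sigma> (S_TMS G) (adjugate2 B ** M) f'"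
    unfolding gm_error_eq_gm_error_of
    by (rule gm_error_of_distr) (simp_all add: distr_cong[OF refl sets_gauss4 refl]
        gauss4_distr_orthogonal_transformation orthogonal_transformation_matrix_vector_mult[OF U])
  finally show ?thesis using G \<Lambda> f' by (intro exI[of _ G] exI[of _ \<Lambda>] exI[of _ f']) simp
qed

end
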